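(* For $\epsilon \in [0,1)$, let $H_\epsilon$ be the solution of $$H_\epsilon''(t) = (\epsilon - Q(t)^2)H_\epsilon(t), \quad t > 0, \qquad H_\epsilon(0) = 0,\ H_\epsilon'(0) = -1.$$ Then $H_\epsilon$ changes its sign at least once on $(0,\infty)$. Moreover, its first positive zero $\tau_\epsilon$ satisfies $\tau_\epsilon \ge \tau_0 > 0$, where $\tau_0$ is the first positive zero of $H_0$ (the solution for $\epsilon = 0$).
   Context: $Q(t)$, $t\ge 0$, denotes the radial profile of the positive radial ground state of $\Delta\phi - \phi + |\phi|^2\phi = 0$ on $\mathbb{R}^3$; it solves $-Q'' - \frac{2}{t}Q' + Q - Q^3 = 0$. *)

theory Defs
  imports "HOL-Analysis.Analysis"
begin

text \<open>Q is the radial profile of the positive radial ground state of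
  Delta phi - phi + phi^3 = 0 on R^3: a positive solution of
  -Q'' - (2/t) Q' + Q - Q^3 = 0 on (0,oo), smooth at the origin (Q'(0) = 0),
  vanishing at infinity. (Such a solution is unique.)\<close>
definition is_ground_state_profile :: "(real \<Rightarrow> real) \<Rightarrow> (real \<Rightarrow> real) \<Rightarrow> bool" where
  "is_ground_state_profile Q Q' \<longleftrightarrow>
     (\<forall>t\<ge>0. (Q has_real_derivative Q' t) (at t within {0..})) \<and>
     continuous_on {0..} Q' \<and>
     Q' 0 = 0 \<and>
     (\<forall>t>0. \<exists>Q''. (Q' has_real_derivative Q'') (at t) \<and>
              - Q'' - (2 / t) * Q' t + Q t - (Q t)^3 = 0) \<and>
     (\<forall>t\<ge>0. Q t > 0) \<and>
     (Q \<longlongrightarrow> 0) at_top"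

definition solves_H :: "(real \<Rightarrow> real) \<Rightarrow> real \<Rightarrow> (real \<Rightarrow> real) \<Rightarrow> (real \<Rightarrow> real) \<Rightarrow> bool" where
  "solves_H Q eps H H' \<longleftrightarrow>
     (\<forall>t\<ge>0. (H has_real_derivative H' t) (at t within {0..})) \<and>
     (\<forall>t>0. (H' has_real_derivative (eps - (Q t)^2) * H t) (at t)) \<and>
     H 0 = 0 \<and> H' 0 = -1"

definition first_pos_zero :: "(real \<Rightarrow> real) \<Rightarrow> real \<Rightarrow> bool" where
  "first_pos_zero f \<tau> \<longleftrightarrow> \<tau> > 0 \<and> f \<tau> = 0 \<and> (\<forall>s. 0 < s \<and> s < \<tau> \<longrightarrow> f s \<noteq> 0)"

end

theory Submission
  imports Defs
begin

text \<open>Both claims are Wronskian arguments. The function u(t) = t Q(t) solves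
  u'' = (1 - Q^2) u, is positive, and is eventually bounded: it is convex once Q < 1,
  while u(t)/t = Q(t) tends to 0. If H stayed nonpositive, the Wronskian W = H' u - H u'
  would satisfy W' = (1 - eps)(-H) u \<ge> 0 and W(0+) = 0, hence be bounded below by some c > 0
  for large t; then (H/u)' = W/u^2 is bounded below by a positive constant and H becomes positive.

  For the comparison of zeros, V = H' H0 - H H0' satisfies V' = eps H H0 \<ge> 0 as long as H and
  H0 are both negative, and V(0+) = 0. If the first zero \<tau> of H came before that of H0, then
  V(\<tau>) = H'(\<tau>) H0(\<tau>) \<ge> 0 with H0(\<tau>) < 0 and H'(\<tau>) \<ge> 0 would give H'(\<tau>) = 0, and
  backward uniqueness for the linear equation (a Gronwall energy estimate) would make H
  vanish before \<tau>.\<close>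

lemma wronskian_has_real_derivative:
  fixes f f' g g' :: "real \<Rightarrow> real"
  assumes "(f has_real_derivative f' t) (at t)" "(f' has_real_derivative p * f t) (at t)"
    and "(g has_real_derivative g' t) (at t)" "(g' has_real_derivative q * g t) (at t)"
  shows "((\<lambda>s. f' s * g s - f s * g' s) has_real_derivative (p - q) * f t * g t) (at t)"
  by (rule DERIV_diff[OF DERIV_mult[OF assms(2,3)] DERIV_mult[OF assms(1,4)], THEN DERIV_cong])
     (simp add: algebra_simps)

lemma tendsto_zero_mult_Bfun:
  fixes f g :: "'a \<Rightarrow> real"
  assumes "(f \<longlongrightarrow> 0) F" and "Bfun g F"
  shows "((\<lambda>x. g x * f x) \<longlongrightarrow> 0) F"
  using bounded_bilinear.Bfun_prod_Zfun[OF bounded_bilinear_mult assms(2)] assms(1)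
  by (simp add: tendsto_Zfun_iff)

lemma continuous_on_compact_abs_bound:
  fixes g :: "'a::topological_space \<Rightarrow> real"
  assumes "continuous_on S g" and "compact S"
  obtains K where "\<And>x. x \<in> S \<Longrightarrow> \<bar>g x\<bar> \<le> K"
  using compact_imp_bounded[OF compact_continuous_image[OF assms]]
  unfolding bounded_iff by auto

lemma continuous_on_atLeast_0_tendsto_at_right:
  fixes f :: "real \<Rightarrow> real"
  assumes "continuous_on {0..} f"
  shows "(f \<longlongrightarrow> f 0) (at_right 0)"
  using assms unfolding continuous_on_def
  by (auto intro: tendsto_within_subset)

lemma DERIV_nonneg_tendsto_zero_imp_nonneg:
  fixes f :: "real \<Rightarrow> real"
  assumes "(f \<longlongrightarrow> 0) (at_right 0)" and "0 < b"
    and "\<And>x. 0 < x \<Longrightarrow> x \<le> b \<Longrightarrow> \<exists>y. (f has_real_derivative y) (at x) \<and> 0 \<le> y"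
  shows "0 \<le> f b"
proof (rule tendsto_le[OF trivial_limit_at_right_real tendsto_const assms(1)])
  have "f x \<le> f b" if "0 < x" "x < b" for x
  proof (rule DERIV_nonneg_imp_nondecreasing[of x b f])
    show "x \<le> b"
      using that by simp
    fix z assume "x \<le> z" "z \<le> b"
    then show "\<exists>y. (f has_real_derivative y) (at z) \<and> 0 \<le> y"
      using assms(3) \<open>0 < x\<close> by simp
  qed
  then show "\<forall>\<^sub>F x in at_right 0. f x \<le> f b"
    unfolding eventually_at_right_field using assms(2) by blast
qed

lemma DERIV_nonneg_at_zero_after_neg:
  fixes f :: "real \<Rightarrow> real"
  assumes "(f has_real_derivative D) (at \<tau>)" and "f \<tau> = 0" and "0 < d"
    and "\<And>s. \<tau> - d < s \<Longrightarrow> s < \<tau> \<Longrightarrow> f s < 0"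
  shows "0 \<le> D"
proof (rule ccontr)
  assume "\<not> 0 \<le> D"
  then obtain d' where "0 < d'" and dec: "\<And>h. 0 < h \<Longrightarrow> h < d' \<Longrightarrow> f \<tau> < f (\<tau> - h)"
    using DERIV_neg_dec_left[OF assms(1)] by auto
  define h where "h = min d d' / 2"
  have "0 < h" "h < d" "h < d'"
    unfolding h_def using \<open>0 < d\<close> \<open>0 < d'\<close> by auto
  then show False
    using dec[of h] assms(2) assms(4)[of "\<tau> - h"] by simp
qed

lemma cross_term_le_energy:
  fixes p x y L :: real
  assumes "\<bar>1 + p\<bar> \<le> L"
  shows "0 \<le> 2 * (1 + p) * (x * y) + L * (x\<^sup>2 + y\<^sup>2)"
proof -
  have "2 * \<bar>x * y\<bar> \<le> x\<^sup>2 + y\<^sup>2"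
    using sum_squares_bound[of "\<bar>x\<bar>" "\<bar>y\<bar>"] by (simp add: abs_mult power2_eq_square)
  with assms have "\<bar>1 + p\<bar> * (2 * \<bar>x * y\<bar>) \<le> L * (x\<^sup>2 + y\<^sup>2)"
    by (intro mult_mono) auto
  moreover have "\<bar>2 * (1 + p) * (x * y)\<bar> = \<bar>1 + p\<bar> * (2 * \<bar>x * y\<bar>)"
    by (simp only: abs_mult)
  ultimately show ?thesis
    by linarith
qed

lemma linear_ode_zero_data_imp_zero:
  fixes h h' p :: "real \<Rightarrow> real"
  assumes "a \<le> b"
    and dh: "\<And>x. a \<le> x \<Longrightarrow> x \<le> b \<Longrightarrow> (h has_real_derivative h' x) (at x)"
    and dh': "\<And>x. a \<le> x \<Longrightarrow> x \<le> b \<Longrightarrow> (h' has_real_derivative p x * h x) (at x)"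
    and p_bound: "\<And>x. a \<le> x \<Longrightarrow> x \<le> b \<Longrightarrow> \<bar>p x\<bar> \<le> P"
    and "h b = 0" "h' b = 0"
  shows "h a = 0"
proof -
  define L where "L = 1 + P"
  define F where "F t = ((h t)\<^sup>2 + (h' t)\<^sup>2) * exp (L * t)" for t
  have "F a \<le> F b"
  proof (rule DERIV_nonneg_imp_nondecreasing[of a b F, OF \<open>a \<le> b\<close>])
    fix x assume x: "a \<le> x" "x \<le> b"
    define E where "E = (h x)\<^sup>2 + (h' x)\<^sup>2"
    have dE: "((\<lambda>t. (h t)\<^sup>2 + (h' t)\<^sup>2) has_real_derivative 2 * (1 + p x) * (h x * h' x)) (at x)"
      by (rule DERIV_add[OF DERIV_power[OF dh[OF x]] DERIV_power[OF dh'[OF x]], THEN DERIV_cong])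
         (simp add: algebra_simps)
    have dexp: "((\<lambda>t. exp (L * t)) has_real_derivative exp (L * x) * L) (at x)"
      using DERIV_chain2[OF DERIV_exp DERIV_cmult[OF DERIV_ident, of L]] by simp
    have "(F has_real_derivative
            (2 * (1 + p x) * (h x * h' x) + L * E) * exp (L * x)) (at x)"
      unfolding F_def
      by (rule DERIV_mult[OF dE dexp, THEN DERIV_cong]) (simp add: E_def algebra_simps)
    moreover have "\<bar>1 + p x\<bar> \<le> L"
      using p_bound[OF x] unfolding L_def by linarith
    then have "0 \<le> 2 * (1 + p x) * (h x * h' x) + L * E"
      unfolding E_def by (rule cross_term_le_energy)
    ultimately show "\<exists>y. (F has_real_derivative y) (at x) \<and> 0 \<le> y"
      by auto
  qed
  also have "F b = 0"
    unfolding F_def using assms(5,6) by simp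
  finally have "(h a)\<^sup>2 + (h' a)\<^sup>2 \<le> 0"
    unfolding F_def by (simp add: mult_le_0_iff)
  then show "h a = 0"
    by (simp add: sum_power2_le_zero_iff)
qed

lemma exists_pos_if_wronskian_ge:
  fixes f f' g g' :: "real \<Rightarrow> real"
  assumes df: "\<And>x. a \<le> x \<Longrightarrow> (f has_real_derivative f' x) (at x)"
    and dg: "\<And>x. a \<le> x \<Longrightarrow> (g has_real_derivative g' x) (at x)"
    and g_bounds: "\<And>x. a \<le> x \<Longrightarrow> 0 < g x \<and> g x \<le> M"
    and wronskian_ge: "\<And>x. a \<le> x \<Longrightarrow> c \<le> f' x * g x - f x * g' x" and "0 < c"
  shows "\<exists>t\<ge>a. 0 < f t"
proof -
  \<comment> \<open>Since (f/g)' = (f' g - f g')/g^2 \<ge> c/M^2, the quotient f/g grows at least linearly.\<close>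
  define k where "k = c / M\<^sup>2"
  have "0 < M"
    using g_bounds[of a] by linarith
  have quotient_grows: "f a / g a + k * (t - a) \<le> f t / g t" if "a \<le> t" for t
  proof -
    have "f a / g a - k * a \<le> f t / g t - k * t"
    proof (rule DERIV_nonneg_imp_nondecreasing[of a t "\<lambda>t. f t / g t - k * t", OF that])
      fix x assume "a \<le> x" "x \<le> t"
      then have gx: "0 < g x" "g x \<le> M" and Wx: "c \<le> f' x * g x - f x * g' x"
        using g_bounds wronskian_ge by auto
      have "((\<lambda>t. f t / g t - k * t) has_real_derivative
              (f' x * g x - f x * g' x) / (g x * g x) - k) (at x)"
        using DERIV_diff[OF DERIV_divide[OF df dg] DERIV_cmult[OF DERIV_ident, of k]] gx \<open>a \<le> x\<close>
        by simp
      moreover have "k \<le> (f' x * g x - f x * g' x) / (g x * g x)"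
      proof -
        have "k \<le> c / (g x * g x)"
          unfolding k_def power2_eq_square using gx \<open>0 < c\<close>
          by (intro divide_left_mono mult_mono mult_pos_pos) auto
        also have "\<dots> \<le> (f' x * g x - f x * g' x) / (g x * g x)"
          using Wx gx by (intro divide_right_mono) auto
        finally show ?thesis .
      qed
      ultimately show "\<exists>y. ((\<lambda>t. f t / g t - k * t) has_real_derivative y) (at x) \<and> 0 \<le> y"
        by auto
    qed
    then show ?thesis
      by (simp add: algebra_simps)
  qed
  define t where "t = a + (\<bar>f a / g a\<bar> + 1) / k"
  have "0 < k"
    unfolding k_def using \<open>0 < c\<close> \<open>0 < M\<close> by simp
  then have "a \<le> t" and "k * (t - a) = \<bar>f a / g a\<bar> + 1"
    unfolding t_def by auto
  then have "0 < f t / g t"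
    using quotient_grows[of t] by linarith
  then show ?thesis
    using \<open>a \<le> t\<close> g_bounds[of t] by (auto simp: zero_less_divide_iff)
qed

lemma convex_above_tangent:
  fixes u u' :: "real \<Rightarrow> real"
  assumes du: "\<And>x. T \<le> x \<Longrightarrow> (u has_real_derivative u' x) (at x)"
    and convex: "\<And>x. T \<le> x \<Longrightarrow> \<exists>y. (u' has_real_derivative y) (at x) \<and> 0 \<le> y"
    and "T \<le> t" "t \<le> s"
  shows "u t + u' t * s - u' t * t \<le> u s"
proof -
  have "u t - u' t * t \<le> u s - u' t * s"
  proof (rule DERIV_nonneg_imp_nondecreasing[of t s "\<lambda>s. u s - u' t * s", OF \<open>t \<le> s\<close>])
    fix x assume x: "t \<le> x" "x \<le> s"
    have "u' t \<le> u' x"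
      using x(1)
    proof (rule DERIV_nonneg_imp_nondecreasing[of t x u'])
      fix z assume "t \<le> z" "z \<le> x"
      then show "\<exists>y. (u' has_real_derivative y) (at z) \<and> 0 \<le> y"
        using convex \<open>T \<le> t\<close> by simp
    qed
    moreover have "((\<lambda>s. u s - u' t * s) has_real_derivative u' x - u' t) (at x)"
      using DERIV_diff[OF du DERIV_cmult[OF DERIV_ident, of "u' t"]] x \<open>T \<le> t\<close> by simp
    ultimately show "\<exists>y. ((\<lambda>s. u s - u' t * s) has_real_derivative y) (at x) \<and> 0 \<le> y"
      by auto
  qed
  then show ?thesis
    by linarith
qed

lemma DERIV_nonpos_if_convex_sublinear:
  fixes u u' :: "real \<Rightarrow> real"
  assumes du: "\<And>t. T \<le> t \<Longrightarrow> (u has_real_derivative u' t) (at t)"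
    and convex: "\<And>t. T \<le> t \<Longrightarrow> \<exists>y. (u' has_real_derivative y) (at t) \<and> 0 \<le> y"
    and sublinear: "((\<lambda>t. u t / t) \<longlongrightarrow> 0) at_top"
    and "T \<le> t"
  shows "u' t \<le> 0"
proof (rule ccontr)
  define m where "m = u' t"
  assume "\<not> u' t \<le> 0"
  then have "0 < m"
    unfolding m_def by simp
  have above_tangent: "u t + m * s - m * t \<le> u s" if "t \<le> s" for s
    unfolding m_def using du convex \<open>T \<le> t\<close> that by (rule convex_above_tangent)
  have "m \<le> 0"
  proof (rule tendsto_le[OF trivial_limit_at_top_linorder sublinear])
    show "((\<lambda>s. m + (u t - m * t) / s) \<longlongrightarrow> m) at_top"
      using tendsto_add[OF tendsto_const tendsto_divide_0[OF tendsto_const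
          filterlim_at_top_imp_at_infinity[OF filterlim_ident]]]
      by simp
    show "\<forall>\<^sub>F s in at_top. m + (u t - m * t) / s \<le> u s / s"
      using eventually_gt_at_top[of "max 0 t"]
    proof eventually_elim
      case (elim s)
      then have "0 < s" "t \<le> s"
        by auto
      then have "m + (u t - m * t) / s = (u t + m * s - m * t) / s"
        by (simp add: field_simps)
      also have "\<dots> \<le> u s / s"
        using above_tangent[OF \<open>t \<le> s\<close>] \<open>0 < s\<close> by (simp add: divide_right_mono)
      finally show ?case .
    qed
  qed
  then show False
    using \<open>0 < m\<close> by simp
qed

lemma first_pos_zero_exists:
  fixes f :: "real \<Rightarrow> real"
  assumes cont: "continuous_on {0<..} f" and "0 < s0"
    and neg: "\<And>t. 0 < t \<Longrightarrow> t < s0 \<Longrightarrow> f t < 0"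
    and "0 < b" "0 < f b"
  shows "\<exists>\<tau>. first_pos_zero f \<tau> \<and> (\<forall>s. 0 < s \<and> s < \<tau> \<longrightarrow> f s < 0)"
proof -
  define s1 where "s1 = s0 / 2"
  have s1: "0 < s1" "s1 < s0" "f s1 < 0"
    using \<open>0 < s0\<close> neg unfolding s1_def by auto
  have cont_from_s1: "continuous_on {s1..x} f" for x
    by (rule continuous_on_subset[OF cont]) (use s1 in auto)
  have zero_between: "\<exists>z. s1 \<le> z \<and> z \<le> x \<and> f z = 0" if "s1 \<le> x" "0 \<le> f x" for x
    using IVT'[of f s1 0 x] s1 that cont_from_s1 by auto
  define S where "S = {s1..b} \<inter> f -` {0}"
  have "s1 \<le> b"
    using neg[of b] \<open>0 < b\<close> \<open>0 < f b\<close> s1 by (cases "b < s0") auto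
  then have "S \<noteq> {}"
    unfolding S_def using zero_between[of b] \<open>0 < f b\<close> by auto
  moreover have "bdd_below S"
    unfolding S_def by (rule bdd_belowI[of _ s1]) auto
  moreover have "closed S"
    unfolding S_def by (rule continuous_closed_preimage[OF cont_from_s1]) auto
  ultimately have "Inf S \<in> S"
    by (rule closed_contains_Inf)
  then have \<tau>: "s1 \<le> Inf S" "f (Inf S) = 0"
    unfolding S_def by auto
  have neg_before: "f s < 0" if "0 < s" "s < Inf S" for s
  proof (rule ccontr)
    assume "\<not> f s < 0"
    then have "s1 \<le> s"
      using neg[of s] that s1 by (cases "s < s0") auto
    then obtain z where "s1 \<le> z" "z \<le> s" "f z = 0"
      using zero_between[of s] \<open>\<not> f s < 0\<close> by auto
    then have "z \<in> S"
      unfolding S_def using that \<open>Inf S \<in> S\<close> S_def by auto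
    then show False
      using cInf_lower[OF _ \<open>bdd_below S\<close>] \<open>z \<le> s\<close> \<open>s < Inf S\<close> by fastforce
  qed
  moreover have "0 < Inf S"
    using \<tau>(1) s1(1) by linarith
  ultimately show ?thesis
    unfolding first_pos_zero_def using \<tau>(2)
    by (intro exI[of _ "Inf S"] conjI allI impI) (auto dest: neg_before)
qed

lemma solves_H_DERIV:
  assumes "solves_H Q eps H H'" and "0 < t"
  shows "(H has_real_derivative H' t) (at t)"
    and "(H' has_real_derivative (eps - (Q t)\<^sup>2) * H t) (at t)"
proof -
  have "(H has_real_derivative H' t) (at t within {0..})"
    using assms unfolding solves_H_def by auto
  then show "(H has_real_derivative H' t) (at t)"
    using at_within_interior[of t "{0..}"] \<open>0 < t\<close> by simp
  show "(H' has_real_derivative (eps - (Q t)\<^sup>2) * H t) (at t)"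
    using assms unfolding solves_H_def by auto
qed

lemma solves_H_continuous_on:
  assumes "solves_H Q eps H H'"
  shows "continuous_on {0..} H"
  using assms unfolding solves_H_def by (intro DERIV_continuous_on) auto

lemma solves_H_tendsto_zero:
  assumes "solves_H Q eps H H'"
  shows "(H \<longlongrightarrow> 0) (at_right 0)"
  using continuous_on_atLeast_0_tendsto_at_right[OF solves_H_continuous_on[OF assms]] assms
  unfolding solves_H_def by simp

lemma solves_H_neg_near_zero:
  assumes "solves_H Q eps H H'"
  shows "\<exists>s0>0. \<forall>t. 0 < t \<and> t < s0 \<longrightarrow> H t < 0"
proof -
  have deriv_0: "(H has_real_derivative -1) (at 0 within {0..})" and "H 0 = 0"
    using assms unfolding solves_H_def by auto
  have "(H has_real_derivative -1) (at_right 0)"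
    by (rule DERIV_subset[OF deriv_0]) auto
  with \<open>H 0 = 0\<close> have "((\<lambda>t. H t / t) \<longlongrightarrow> -1) (at_right 0)"
    by (simp add: DERIV_def has_field_derivative_iff)
  then have "\<forall>\<^sub>F t in at_right 0. H t / t < 0"
    by (intro order_tendstoD) auto
  then obtain s0 where "0 < s0" "\<And>t. 0 < t \<Longrightarrow> t < s0 \<Longrightarrow> H t / t < 0"
    unfolding eventually_at_right_field by auto
  then show ?thesis
    by (auto simp: divide_less_0_iff)
qed

lemma solves_H_Bfun_deriv:
  assumes sH: "solves_H Q eps H H'" and "continuous_on {0..} Q"
  shows "Bfun H' (at_right 0)"
proof -
  have "continuous_on {0..1} (\<lambda>z. (eps - (Q z)\<^sup>2) * H z)"
    by (intro continuous_intros continuous_on_subset[OF solves_H_continuous_on[OF sH]]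
        continuous_on_subset[OF assms(2)]) auto
  then obtain K where K: "\<And>z. z \<in> {0..1} \<Longrightarrow> \<bar>(eps - (Q z)\<^sup>2) * H z\<bar> \<le> K"
    using continuous_on_compact_abs_bound compact_Icc by blast
  have "\<bar>H' t\<bar> \<le> \<bar>H' 1\<bar> + K" if t: "0 < t" "t \<le> 1" for t
  proof (cases "t = 1")
    case True
    then show ?thesis
      using K[of 1] by simp
  next
    case False
    then have "t < 1"
      using t by simp
    have "(H' has_real_derivative (eps - (Q x)\<^sup>2) * H x) (at x)" if "t \<le> x" "x \<le> 1" for x
      using solves_H_DERIV(2)[OF sH, of x] t(1) that by simp
    from MVT2[OF \<open>t < 1\<close> this]
    obtain z where z: "t < z" "z < 1" "H' 1 - H' t = (1 - t) * ((eps - (Q z)\<^sup>2) * H z)"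
      by blast
    have "\<bar>(1 - t) * ((eps - (Q z)\<^sup>2) * H z)\<bar> \<le> 1 * K"
      unfolding abs_mult using K[of z] z t by (intro mult_mono) auto
    then show ?thesis
      using z(3) by linarith
  qed
  then show ?thesis
    by (intro BfunI[where K = "\<bar>H' 1\<bar> + K"])
       (auto simp: eventually_at_right_field intro!: exI[of _ 1])
qed

lemma solves_H_first_pos_zero:
  assumes sH: "solves_H Q eps H H'" and "0 < b" "0 < H b"
  shows "\<exists>\<tau>. first_pos_zero H \<tau> \<and> (\<forall>s. 0 < s \<and> s < \<tau> \<longrightarrow> H s < 0)"
proof -
  obtain s0 where "0 < s0" and neg: "\<And>t. 0 < t \<Longrightarrow> t < s0 \<Longrightarrow> H t < 0"
    using solves_H_neg_near_zero[OF sH] by blast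
  have "continuous_on {0<..} H"
    by (rule continuous_on_subset[OF solves_H_continuous_on[OF sH]]) auto
  from first_pos_zero_exists[OF this \<open>0 < s0\<close> neg assms(2,3)] show ?thesis .
qed

lemma ground_state_continuous_on:
  assumes "is_ground_state_profile Q Q'"
  shows "continuous_on {0..} Q"
  using assms unfolding is_ground_state_profile_def by (intro DERIV_continuous_on) auto

text \<open>The substitution u = t Q turns the radial Laplacian of \<real>^3 into d^2/dt^2.\<close>
lemma ground_state_radial_DERIV:
  assumes gs: "is_ground_state_profile Q Q'" and "0 < t"
  shows "((\<lambda>t. t * Q t) has_real_derivative Q t + t * Q' t) (at t)"
    and "((\<lambda>t. Q t + t * Q' t) has_real_derivative (1 - (Q t)\<^sup>2) * (t * Q t)) (at t)"
proof -
  have "(Q has_real_derivative Q' t) (at t within {0..})"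
    using assms unfolding is_ground_state_profile_def by auto
  then have dQ: "(Q has_real_derivative Q' t) (at t)"
    using at_within_interior[of t "{0..}"] \<open>0 < t\<close> by simp
  then show "((\<lambda>t. t * Q t) has_real_derivative Q t + t * Q' t) (at t)"
    by (rule DERIV_mult[OF DERIV_ident, THEN DERIV_cong]) simp
  obtain Q'' where dQ': "(Q' has_real_derivative Q'') (at t)"
    and ode: "- Q'' - (2 / t) * Q' t + Q t - (Q t)^3 = 0"
    using assms unfolding is_ground_state_profile_def by blast
  have "Q'' = - (2 / t) * Q' t + Q t - (Q t)^3"
    using ode by linarith
  then have "Q' t + (1 * Q' t + Q'' * t) = (1 - (Q t)\<^sup>2) * (t * Q t)"
    using \<open>0 < t\<close> by (simp add: field_simps power2_eq_square power3_eq_cube)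
  then show "((\<lambda>t. Q t + t * Q' t) has_real_derivative (1 - (Q t)\<^sup>2) * (t * Q t)) (at t)"
    by (rule DERIV_cong[OF DERIV_add[OF dQ DERIV_mult[OF DERIV_ident dQ']]])
qed

lemma ground_state_radial_tendsto_at_right:
  assumes "is_ground_state_profile Q Q'"
  shows "((\<lambda>t. t * Q t) \<longlongrightarrow> 0) (at_right 0)"
    and "((\<lambda>t. Q t + t * Q' t) \<longlongrightarrow> Q 0) (at_right 0)"
proof -
  have Q: "(Q \<longlongrightarrow> Q 0) (at_right 0)" and Q': "(Q' \<longlongrightarrow> Q' 0) (at_right 0)"
    using assms ground_state_continuous_on[OF assms] continuous_on_atLeast_0_tendsto_at_right
    unfolding is_ground_state_profile_def by blast+
  show "((\<lambda>t. t * Q t) \<longlongrightarrow> 0) (at_right 0)"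
    using tendsto_mult[OF tendsto_ident_at Q] by simp
  show "((\<lambda>t. Q t + t * Q' t) \<longlongrightarrow> Q 0) (at_right 0)"
    using tendsto_add[OF Q tendsto_mult[OF tendsto_ident_at Q']] by simp
qed

lemma ground_state_radial_bounded:
  assumes gs: "is_ground_state_profile Q Q'"
  shows "\<exists>T>0. \<exists>M. \<forall>t\<ge>T. t * Q t \<le> M"
proof -
  have Q_pos: "\<And>t. 0 \<le> t \<Longrightarrow> 0 < Q t" and Q_lim: "(Q \<longlongrightarrow> 0) at_top"
    using gs unfolding is_ground_state_profile_def by auto
  have "\<forall>\<^sub>F t in at_top. Q t < 1"
    using Q_lim by (intro order_tendstoD) auto
  then obtain T0 where T0: "\<And>t. T0 \<le> t \<Longrightarrow> Q t < 1"
    unfolding eventually_at_top_linorder by blast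
  define T where "T = max T0 1"
  have "0 < T" and Q_lt_1: "\<And>t. T \<le> t \<Longrightarrow> Q t < 1"
    using T0 unfolding T_def by auto
  have du: "((\<lambda>t. t * Q t) has_real_derivative Q t + t * Q' t) (at t)" if "T \<le> t" for t
    using ground_state_radial_DERIV(1)[OF gs] that \<open>0 < T\<close> by simp
  have convex: "\<exists>y. ((\<lambda>t. Q t + t * Q' t) has_real_derivative y) (at t) \<and> 0 \<le> y"
    if "T \<le> t" for t
  proof -
    have "0 < t" "0 < Q t" "Q t < 1"
      using that \<open>0 < T\<close> Q_pos Q_lt_1 by auto
    then have "(Q t)\<^sup>2 < 1"
      by (simp add: power_less_one_iff)
    then have "0 \<le> (1 - (Q t)\<^sup>2) * (t * Q t)"
      using \<open>0 < t\<close> \<open>0 < Q t\<close> by (intro mult_nonneg_nonneg) auto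
    then show ?thesis
      using ground_state_radial_DERIV(2)[OF gs \<open>0 < t\<close>] by blast
  qed
  have "\<forall>\<^sub>F t in at_top. Q t = t * Q t / t"
    by (rule eventually_mono[OF eventually_gt_at_top[of 0]]) simp
  then have sublinear: "((\<lambda>t. t * Q t / t) \<longlongrightarrow> 0) at_top"
    by (rule Lim_transform_eventually[OF Q_lim])
  have radial_nonincreasing: "t * Q t \<le> T * Q T" if "T \<le> t" for t
  proof (rule DERIV_nonpos_imp_nonincreasing[of T t "\<lambda>t. t * Q t", OF that])
    fix x assume "T \<le> x" "x \<le> t"
    then show "\<exists>y. ((\<lambda>t. t * Q t) has_real_derivative y) (at x) \<and> y \<le> 0"
      using du DERIV_nonpos_if_convex_sublinear[OF du convex sublinear] by blast
  qed
  then show ?thesis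
    using \<open>0 < T\<close> by blast
qed

lemma ground_state_wronskian_DERIV:
  assumes gs: "is_ground_state_profile Q Q'" and sH: "solves_H Q eps H H'" and "0 < t"
  shows "((\<lambda>t. H' t * (t * Q t) - H t * (Q t + t * Q' t))
           has_real_derivative (eps - 1) * H t * (t * Q t)) (at t)"
  by (rule wronskian_has_real_derivative[OF solves_H_DERIV[OF sH \<open>0 < t\<close>]
        ground_state_radial_DERIV[OF gs \<open>0 < t\<close>], THEN DERIV_cong]) (simp add: algebra_simps)

lemma ground_state_wronskian_tendsto_0:
  assumes gs: "is_ground_state_profile Q Q'" and sH: "solves_H Q eps H H'"
  shows "((\<lambda>t. H' t * (t * Q t) - H t * (Q t + t * Q' t)) \<longlongrightarrow> 0) (at_right 0)"
proof -
  have "((\<lambda>t. H' t * (t * Q t)) \<longlongrightarrow> 0) (at_right 0)"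
    by (rule tendsto_zero_mult_Bfun[OF ground_state_radial_tendsto_at_right(1)[OF gs]
          solves_H_Bfun_deriv[OF sH ground_state_continuous_on[OF gs]]])
  moreover have "((\<lambda>t. H t * (Q t + t * Q' t)) \<longlongrightarrow> 0 * Q 0) (at_right 0)"
    by (rule tendsto_mult[OF solves_H_tendsto_zero[OF sH] ground_state_radial_tendsto_at_right(2)[OF gs]])
  ultimately have "((\<lambda>t. H' t * (t * Q t) - H t * (Q t + t * Q' t)) \<longlongrightarrow> 0 - 0 * Q 0) (at_right 0)"
    by (rule tendsto_diff)
  then show ?thesis
    by simp
qed

lemma ground_state_wronskian_eventually_ge:
  assumes gs: "is_ground_state_profile Q Q'" and "eps < 1" and sH: "solves_H Q eps H H'"
    and H_nonpos: "\<And>t. 0 < t \<Longrightarrow> H t \<le> 0"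
  shows "\<exists>a>0. \<exists>c>0. \<forall>t\<ge>a. c \<le> H' t * (t * Q t) - H t * (Q t + t * Q' t)"
proof -
  obtain s0 where "0 < s0" and H_neg: "\<And>t. 0 < t \<Longrightarrow> t < s0 \<Longrightarrow> H t < 0"
    using solves_H_neg_near_zero[OF sH] by blast
  have Q_pos: "\<And>t. 0 \<le> t \<Longrightarrow> 0 < Q t"
    using gs unfolding is_ground_state_profile_def by auto
  define W where "W = (\<lambda>t. H' t * (t * Q t) - H t * (Q t + t * Q' t))"
  have dW: "(W has_real_derivative (eps - 1) * H t * (t * Q t)) (at t)" if "0 < t" for t
    unfolding W_def by (rule ground_state_wronskian_DERIV[OF gs sH that])
  have W_tendsto: "(W \<longlongrightarrow> 0) (at_right 0)"
    unfolding W_def by (rule ground_state_wronskian_tendsto_0[OF gs sH])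
  have dW_nonneg: "0 \<le> (eps - 1) * H t * (t * Q t)" if "0 < t" for t
  proof -
    have "0 \<le> (eps - 1) * H t"
      using \<open>eps < 1\<close> H_nonpos[OF that] by (intro mult_nonpos_nonpos) auto
    then show ?thesis
      using Q_pos[of t] that by (simp add: zero_le_mult_iff)
  qed
  have dW_pos: "0 < (eps - 1) * H t * (t * Q t)" if "0 < t" "t < s0" for t
    using \<open>eps < 1\<close> H_neg[OF that] Q_pos[of t] that by (simp add: mult_neg_neg)
  have "0 \<le> W (s0 / 4)"
  proof (rule DERIV_nonneg_tendsto_zero_imp_nonneg[OF W_tendsto])
    show "0 < s0 / 4"
      using \<open>0 < s0\<close> by simp
    fix x assume "0 < x" "x \<le> s0 / 4"
    then show "\<exists>y. (W has_real_derivative y) (at x) \<and> 0 \<le> y"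
      using dW dW_nonneg by blast
  qed
  also have "W (s0 / 4) < W (s0 / 2)"
  proof (rule DERIV_pos_imp_increasing[of "s0 / 4" "s0 / 2" W])
    show "s0 / 4 < s0 / 2"
      using \<open>0 < s0\<close> by simp
    fix x assume "s0 / 4 \<le> x" "x \<le> s0 / 2"
    then have "0 < x" "x < s0"
      using \<open>0 < s0\<close> by auto
    then show "\<exists>y. (W has_real_derivative y) (at x) \<and> 0 < y"
      using dW dW_pos by blast
  qed
  finally have "0 < W (s0 / 2)" .
  moreover have "W (s0 / 2) \<le> W t" if "s0 / 2 \<le> t" for t
  proof (rule DERIV_nonneg_imp_nondecreasing[of "s0 / 2" t W, OF that])
    fix x assume "s0 / 2 \<le> x" "x \<le> t"
    then have "0 < x"
      using \<open>0 < s0\<close> by linarith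
    then show "\<exists>y. (W has_real_derivative y) (at x) \<and> 0 \<le> y"
      using dW dW_nonneg by blast
  qed
  moreover have "0 < s0 / 2"
    using \<open>0 < s0\<close> by simp
  ultimately show ?thesis
    unfolding W_def by blast
qed

lemma solves_H_sign_change:
  assumes gs: "is_ground_state_profile Q Q'" and "eps < 1" and sH: "solves_H Q eps H H'"
  shows "\<exists>b>0. 0 < H b"
proof (rule ccontr)
  assume "\<not> ?thesis"
  then have H_nonpos: "H t \<le> 0" if "0 < t" for t
    using that by (meson not_le)
  obtain a c where "0 < a" "0 < c"
    and wronskian_ge: "\<And>t. a \<le> t \<Longrightarrow> c \<le> H' t * (t * Q t) - H t * (Q t + t * Q' t)"
    using ground_state_wronskian_eventually_ge[OF gs \<open>eps < 1\<close> sH H_nonpos] by blast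
  obtain T M where "0 < T" and radial_bounded: "\<And>t. T \<le> t \<Longrightarrow> t * Q t \<le> M"
    using ground_state_radial_bounded[OF gs] by blast
  have Q_pos: "\<And>t. 0 \<le> t \<Longrightarrow> 0 < Q t"
    using gs unfolding is_ground_state_profile_def by auto
  have "\<exists>t\<ge>max T a. 0 < H t"
  proof (rule exists_pos_if_wronskian_ge[where f' = H' and g' = "\<lambda>t. Q t + t * Q' t"
        and M = M and c = c])
    fix x assume x: "max T a \<le> x"
    then have "0 < x"
      using \<open>0 < T\<close> by linarith
    then show "(H has_real_derivative H' x) (at x)"
      and "((\<lambda>t. t * Q t) has_real_derivative Q x + x * Q' x) (at x)"
      using solves_H_DERIV(1)[OF sH] ground_state_radial_DERIV(1)[OF gs] by auto
    show "0 < x * Q x \<and> x * Q x \<le> M"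
      using \<open>0 < x\<close> Q_pos[of x] radial_bounded[of x] x by auto
    show "c \<le> H' x * (x * Q x) - H x * (Q x + x * Q' x)"
      using wronskian_ge[of x] x by auto
  qed fact
  then obtain t where "max T a \<le> t" "0 < H t"
    by blast
  moreover have "0 < t"
    using \<open>0 < T\<close> max.cobounded1[of T a] \<open>max T a \<le> t\<close> by linarith
  ultimately show False
    using H_nonpos by fastforce
qed

lemma solves_H_deriv_eq_0_at_zero_if_H0_neg:
  assumes gs: "is_ground_state_profile Q Q'" and "0 \<le> eps"
    and sH: "solves_H Q eps H H'" and sH0: "solves_H Q 0 H0 H0'"
    and "0 < \<tau>" "H \<tau> = 0" and H_neg: "\<And>s. 0 < s \<Longrightarrow> s < \<tau> \<Longrightarrow> H s < 0"
    and H0_neg: "\<And>t. 0 < t \<Longrightarrow> t \<le> \<tau> \<Longrightarrow> H0 t < 0"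
  shows "H' \<tau> = 0"
proof -
  define V where "V = (\<lambda>t. H' t * H0 t - H t * H0' t)"
  have dV: "(V has_real_derivative eps * H t * H0 t) (at t)" if "0 < t" for t
    unfolding V_def
    by (rule wronskian_has_real_derivative[OF solves_H_DERIV[OF sH that]
          solves_H_DERIV[OF sH0 that], THEN DERIV_cong]) (simp add: algebra_simps)
  have dV_nonneg: "0 \<le> eps * H t * H0 t" if "0 < t" "t \<le> \<tau>" for t
  proof -
    have "H t \<le> 0"
      using H_neg[of t] \<open>H \<tau> = 0\<close> that by (cases "t = \<tau>") auto
    then have "0 \<le> H t * H0 t"
      using H0_neg[OF that] by (intro mult_nonpos_nonpos) auto
    then show ?thesis
      using mult_nonneg_nonneg[OF \<open>0 \<le> eps\<close>] by (simp add: mult.assoc)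
  qed
  have Bfun_derivs: "Bfun H' (at_right 0)" "Bfun H0' (at_right 0)"
    using solves_H_Bfun_deriv[OF _ ground_state_continuous_on[OF gs]] sH sH0 by blast+
  have "((\<lambda>t. H' t * H0 t) \<longlongrightarrow> 0) (at_right 0)"
    by (rule tendsto_zero_mult_Bfun[OF solves_H_tendsto_zero[OF sH0] Bfun_derivs(1)])
  moreover have "((\<lambda>t. H t * H0' t) \<longlongrightarrow> 0) (at_right 0)"
    using tendsto_zero_mult_Bfun[OF solves_H_tendsto_zero[OF sH] Bfun_derivs(2)]
    by (simp add: mult.commute)
  ultimately have "(V \<longlongrightarrow> 0 - 0) (at_right 0)"
    unfolding V_def by (rule tendsto_diff)
  then have V_tendsto: "(V \<longlongrightarrow> 0) (at_right 0)"
    by simp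
  have "0 \<le> V \<tau>"
  proof (rule DERIV_nonneg_tendsto_zero_imp_nonneg[OF V_tendsto \<open>0 < \<tau>\<close>])
    fix x assume "0 < x" "x \<le> \<tau>"
    then show "\<exists>y. (V has_real_derivative y) (at x) \<and> 0 \<le> y"
      using dV dV_nonneg by blast
  qed
  then have "0 \<le> H' \<tau> * H0 \<tau>"
    unfolding V_def using \<open>H \<tau> = 0\<close> by simp
  moreover have "0 \<le> H' \<tau>"
    using solves_H_DERIV(1)[OF sH \<open>0 < \<tau>\<close>] \<open>H \<tau> = 0\<close> \<open>0 < \<tau>\<close> H_neg
    by (intro DERIV_nonneg_at_zero_after_neg[of H "H' \<tau>" \<tau> \<tau>]) auto
  ultimately show "H' \<tau> = 0"
    using H0_neg[of \<tau>] \<open>0 < \<tau>\<close> by (simp add: zero_le_mult_iff)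
qed

lemma first_pos_zero_le:
  assumes gs: "is_ground_state_profile Q Q'" and "0 \<le> eps"
    and sH: "solves_H Q eps H H'" and sH0: "solves_H Q 0 H0 H0'"
    and "first_pos_zero H \<tau>" and H_neg: "\<And>s. 0 < s \<Longrightarrow> s < \<tau> \<Longrightarrow> H s < 0"
    and H0_neg: "\<And>s. 0 < s \<Longrightarrow> s < \<tau>0 \<Longrightarrow> H0 s < 0"
  shows "\<tau>0 \<le> \<tau>"
proof (rule ccontr)
  assume "\<not> \<tau>0 \<le> \<tau>"
  have "0 < \<tau>" "H \<tau> = 0"
    using \<open>first_pos_zero H \<tau>\<close> unfolding first_pos_zero_def by auto
  have "H0 t < 0" if "0 < t" "t \<le> \<tau>" for t
    using H0_neg that \<open>\<not> \<tau>0 \<le> \<tau>\<close> by simp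
  with \<open>0 < \<tau>\<close> \<open>H \<tau> = 0\<close> have "H' \<tau> = 0"
    using solves_H_deriv_eq_0_at_zero_if_H0_neg[OF gs \<open>0 \<le> eps\<close> sH sH0] H_neg by blast
  have "continuous_on {\<tau> / 2..\<tau>} (\<lambda>x. eps - (Q x)\<^sup>2)"
    using \<open>0 < \<tau>\<close>
    by (intro continuous_intros continuous_on_subset[OF ground_state_continuous_on[OF gs]]) auto
  then obtain P where "\<And>x. x \<in> {\<tau> / 2..\<tau>} \<Longrightarrow> \<bar>eps - (Q x)\<^sup>2\<bar> \<le> P"
    using continuous_on_compact_abs_bound compact_Icc by blast
  then have "H (\<tau> / 2) = 0"
    using solves_H_DERIV[OF sH] \<open>0 < \<tau>\<close> \<open>H \<tau> = 0\<close> \<open>H' \<tau> = 0\<close>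
    by (intro linear_ode_zero_data_imp_zero[of "\<tau> / 2" \<tau> H H' "\<lambda>x. eps - (Q x)\<^sup>2" P]) auto
  then show False
    using H_neg[of "\<tau> / 2"] \<open>0 < \<tau>\<close> by simp
qed

theorem lemma7p1:
  fixes Q Q' H H' H0 H0' :: "real \<Rightarrow> real" and eps :: real
  assumes "is_ground_state_profile Q Q'"
    and "0 \<le> eps" and "eps < 1"
    and "solves_H Q eps H H'"
    and "solves_H Q 0 H0 H0'"
  shows "(\<exists>a b. 0 < a \<and> a < b \<and> H a * H b < 0) \<and>
         (\<exists>\<tau>\<epsilon> \<tau>0. first_pos_zero H \<tau>\<epsilon> \<and> first_pos_zero H0 \<tau>0 \<and> 0 < \<tau>0 \<and> \<tau>0 \<le> \<tau>\<epsilon>)"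
proof -
  obtain b where "0 < b" "0 < H b"
    using solves_H_sign_change[OF assms(1,3,4)] by blast
  obtain b0 where "0 < b0" "0 < H0 b0"
    using solves_H_sign_change[OF assms(1) _ assms(5)] by auto
  obtain \<tau>\<epsilon> where \<tau>\<epsilon>: "first_pos_zero H \<tau>\<epsilon>" "\<forall>s. 0 < s \<and> s < \<tau>\<epsilon> \<longrightarrow> H s < 0"
    using solves_H_first_pos_zero[OF assms(4) \<open>0 < b\<close> \<open>0 < H b\<close>] by blast
  obtain \<tau>0 where \<tau>0: "first_pos_zero H0 \<tau>0" "\<forall>s. 0 < s \<and> s < \<tau>0 \<longrightarrow> H0 s < 0"
    using solves_H_first_pos_zero[OF assms(5) \<open>0 < b0\<close> \<open>0 < H0 b0\<close>] by blast
  have "\<tau>0 \<le> \<tau>\<epsilon>"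
    using first_pos_zero_le[OF assms(1,2,4,5) \<tau>\<epsilon>(1)] \<tau>\<epsilon>(2) \<tau>0(2) by blast
  have "\<tau>\<epsilon> \<le> b"
    using \<tau>\<epsilon>(2) \<open>0 < b\<close> \<open>0 < H b\<close> by (meson less_asym not_le)
  then have sign_change: "0 < \<tau>\<epsilon> / 2 \<and> \<tau>\<epsilon> / 2 < b \<and> H (\<tau>\<epsilon> / 2) * H b < 0"
    using \<tau>\<epsilon> \<open>0 < H b\<close> unfolding first_pos_zero_def by (auto simp: mult_neg_pos)
  show ?thesis
    using sign_change \<open>\<tau>0 \<le> \<tau>\<epsilon>\<close> \<tau>\<epsilon>(1) \<tau>0(1) unfolding first_pos_zero_def by blast
qed

end
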